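(* In the binary setting below, with $\mathrm{CL}_{\mathrm{induced}}:=-\mathbb{E}[\mathrm{Var}(S-C\mid S_B)]$ and $\mathrm{GL}_{\mathrm{induced}}:=\mathbb{E}[\mathrm{Var}(C\mid S_B)]$, $$-\mathbb{E}\Big[\sqrt{\mathrm{Var}(S\mid S_B)}\big(2\sqrt{C_B(1-C_B)}+\sqrt{\mathrm{Var}(S\mid S_B)}\big)\Big]\le\mathrm{CL}_{\mathrm{induced}}+\mathrm{GL}_{\mathrm{induced}}\le\mathbb{E}\Big[\sqrt{\mathrm{Var}(S\mid S_B)}\big(2\sqrt{C_B(1-C_B)}-\sqrt{\mathrm{Var}(S\mid S_B)}\big)\Big].$$ With $N$ equal-width bins, $$-\tfrac1N\mathbb{E}\big[\sqrt{C_B(1-C_B)}\big]-\tfrac{1}{4N^2}\le\mathrm{CL}_{\mathrm{induced}}+\mathrm{GL}_{\mathrm{induced}}\le\tfrac1N\mathbb{E}\big[\sqrt{C_B(1-C_B)}\big].$$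
   Context: Binary setting: $(X,Y)$ jointly distributed with $Y\in\{0,1\}$; $Q:=P(Y=1\mid X)$; $S=f(X)\in[0,1]$ is a classifier's confidence for the positive class; $C:=\mathbb{E}[Q\mid S]$. Given a partition of $[0,1]$ into interval bins $\mathcal{B}_j$, $S_B$ equals $\mathbb{E}[S\mid S\in\mathcal{B}_j]$ on $\{S\in\mathcal{B}_j\}$, and $C_B:=\mathbb{E}[Q\mid S_B]=\mathbb{E}[C\mid S_B]$. $\mathrm{Var}(\cdot\mid S_B)$ is the ordinary conditional variance. "$N$ equal-width bins" means the bins are the intervals of length $1/N$ partitioning $[0,1]$. *)

theory Defs
  imports "HOL-Probability.Probability"
begin

definition gen_sigma :: "'a measure \<Rightarrow> ('a \<Rightarrow> real) \<Rightarrow> 'a measure" where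
  "gen_sigma M Z = vimage_algebra (space M) Z borel"

definition cond_var :: "'a measure \<Rightarrow> 'a measure \<Rightarrow> ('a \<Rightarrow> real) \<Rightarrow> ('a \<Rightarrow> real)" where
  "cond_var M F Z = real_cond_exp M F (\<lambda>w. (Z w - real_cond_exp M F Z w)\<^sup>2)"

definition bin_partition :: "real set set \<Rightarrow> bool" where
  "bin_partition \<B> \<longleftrightarrow> finite \<B> \<and> (\<forall>B\<in>\<B>. is_interval B \<and> B \<noteq> {}) \<and>
     disjoint \<B> \<and> \<Union>\<B> = {0..1}"

definition bin_mean :: "'a measure \<Rightarrow> ('a \<Rightarrow> real) \<Rightarrow> real set \<Rightarrow> real" where
  "bin_mean M S B = (LINT w:(S -` B \<inter> space M)|M. S w) / measure M (S -` B \<inter> space M)"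

definition binned :: "'a measure \<Rightarrow> real set set \<Rightarrow> ('a \<Rightarrow> real) \<Rightarrow> 'a \<Rightarrow> real" where
  "binned M \<B> S w = bin_mean M S (THE B. B \<in> \<B> \<and> S w \<in> B)"

end

(*
  Let G be the sigma-algebra generated by S_B, V = Var(S | G) and K = Cov(S, C | G).
  Expanding Var(S - C | G) gives CL_induced + GL_induced = E[2 K - V].  By the conditional
  Cauchy-Schwarz inequality K^2 <= V Var(C | G), and as C takes values in [0,1],
  Var(C | G) <= E[C | G] (1 - E[C | G]) = C_B (1 - C_B), using the tower property for
  sigma(S_B) <= sigma(S).  So |K| <= sqrt V sqrt (C_B (1 - C_B)), which bounds 2 K - V
  pointwise.  For N equal-width bins, S is within 1/(2N) of the midpoint of its bin, and this
  midpoint is a function of S_B because almost surely S_B lies in the same bin as S; hence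
  V <= 1/(4 N^2).
*)
theory Submission
  imports Defs
begin

(* Only rational t: the conditional Cauchy-Schwarz inequality below holds almost surely
   for each fixed t, and only countably many exceptional null sets can be discarded. *)
lemma sq_le_mult_if_quadratic_nonneg_on_Rats:
  fixes a k v :: real
  assumes nonneg: "\<forall>t\<in>\<rat>. 0 \<le> a + 2 * t * k + t\<^sup>2 * v" and "0 \<le> v"
  shows "k\<^sup>2 \<le> a * v"
proof -
  have "closure \<rat> \<subseteq> {t. 0 \<le> a + 2 * t * k + t\<^sup>2 * v}"
    by (intro closure_minimal closed_Collect_le continuous_intros) (use nonneg in auto)
  then have quadratic_nonneg: "0 \<le> a + 2 * t * k + t\<^sup>2 * v" for t
    using Rats_closure_real by auto
  show ?thesis
  proof (cases "v = 0")
    case True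
    have "k = 0"
    proof (rule ccontr)
      assume "k \<noteq> 0"
      then show False
        using quadratic_nonneg[of "- (a + 1) / (2 * k)"] True by (simp add: field_simps)
    qed
    with True show ?thesis by simp
  next
    case False
    with \<open>0 \<le> v\<close> have "0 < v" by simp
    have "0 \<le> a + 2 * (- k / v) * k + (- k / v)\<^sup>2 * v" by (rule quadratic_nonneg)
    also have "\<dots> = a - k\<^sup>2 / v"
      using \<open>0 < v\<close> by (simp add: field_simps power2_eq_square)
    finally show ?thesis
      using \<open>0 < v\<close> by (simp add: field_simps)
  qed
qed

lemma two_mul_minus_bounds:
  fixes k v s :: real
  assumes "\<bar>k\<bar> \<le> sqrt v * s" and "0 \<le> v"
  shows "- (sqrt v * (2 * s + sqrt v)) \<le> 2 * k - v" and "2 * k - v \<le> sqrt v * (2 * s - sqrt v)"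
proof -
  have "v = sqrt v * sqrt v"
    using \<open>0 \<le> v\<close> by simp
  with assms(1) show "- (sqrt v * (2 * s + sqrt v)) \<le> 2 * k - v" "2 * k - v \<le> sqrt v * (2 * s - sqrt v)"
    by (auto simp: algebra_simps abs_le_iff)
qed

lemma two_mul_minus_bounds_of_le_sq:
  fixes k v s d :: real
  assumes "\<bar>k\<bar> \<le> sqrt v * s" and "0 \<le> v" "v \<le> d\<^sup>2" "0 \<le> s" "0 \<le> d"
  shows "- (2 * d * s) - d\<^sup>2 \<le> 2 * k - v" and "2 * k - v \<le> 2 * d * s"
proof -
  have "sqrt v \<le> d"
    using real_sqrt_le_mono[OF \<open>v \<le> d\<^sup>2\<close>] \<open>0 \<le> d\<close> by simp
  then have "sqrt v * s \<le> d * s"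
    using \<open>0 \<le> s\<close> by (rule mult_right_mono)
  with assms show "- (2 * d * s) - d\<^sup>2 \<le> 2 * k - v" "2 * k - v \<le> 2 * d * s"
    by (auto simp: abs_le_iff)
qed

lemma (in finite_measure) integrable_mult_of_AE_bounded:
  fixes f g :: "'a \<Rightarrow> real"
  assumes [measurable]: "f \<in> borel_measurable M" "g \<in> borel_measurable M"
    and "AE x in M. \<bar>f x\<bar> \<le> a" and "AE x in M. \<bar>g x\<bar> \<le> b"
  shows "integrable M (\<lambda>x. f x * g x)"
proof (rule integrable_const_bound[where B = "a * b"])
  show "AE x in M. norm (f x * g x) \<le> a * b"
    using assms(3,4) by eventually_elim (auto simp: abs_mult intro: mult_mono)
qed simp

definition cond_cov :: "'a measure \<Rightarrow> 'a measure \<Rightarrow> ('a \<Rightarrow> real) \<Rightarrow> ('a \<Rightarrow> real) \<Rightarrow> 'a \<Rightarrow> real"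
  where "cond_cov M F X Y =
    real_cond_exp M F (\<lambda>w. (X w - real_cond_exp M F X w) * (Y w - real_cond_exp M F Y w))"

lemma cond_var_eq_cond_cov: "cond_var M F X = cond_cov M F X X"
  unfolding cond_var_def cond_cov_def power2_eq_square ..

context finite_measure_subalgebra
begin

lemma real_cond_exp_between:
  assumes "integrable M f" and "AE x in M. a \<le> f x \<and> f x \<le> b"
  shows "AE x in M. a \<le> real_cond_exp M F f x \<and> real_cond_exp M F f x \<le> b"
  using real_cond_exp_ge_c[OF assms(1), of a] real_cond_exp_le_c[OF assms(1), of b] assms(2)
  by auto

lemma real_cond_exp_cauchy_schwarz:
  assumes [measurable]: "f \<in> borel_measurable M" "g \<in> borel_measurable M"
    and "integrable M (\<lambda>x. (f x)\<^sup>2)" "integrable M (\<lambda>x. (g x)\<^sup>2)" "integrable M (\<lambda>x. f x * g x)"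
  shows "AE x in M. (real_cond_exp M F (\<lambda>x. f x * g x) x)\<^sup>2
    \<le> real_cond_exp M F (\<lambda>x. (f x)\<^sup>2) x * real_cond_exp M F (\<lambda>x. (g x)\<^sup>2) x"
proof -
  have "AE x in M. 0 \<le> real_cond_exp M F (\<lambda>x. (f x)\<^sup>2) x
      + 2 * t * real_cond_exp M F (\<lambda>x. f x * g x) x + t\<^sup>2 * real_cond_exp M F (\<lambda>x. (g x)\<^sup>2) x"
    for t :: real
  proof -
    have square: "(\<lambda>x. (f x + t * g x)\<^sup>2) = (\<lambda>x. (f x)\<^sup>2 + ((2 * t) * (f x * g x) + t\<^sup>2 * (g x)\<^sup>2))"
      by (auto simp: power2_sum algebra_simps)
    have int_fg: "integrable M (\<lambda>x. (2 * t) * (f x * g x))" and int_g: "integrable M (\<lambda>x. t\<^sup>2 * (g x)\<^sup>2)"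
      using assms(4,5) by simp_all
    have "AE x in M. 0 \<le> real_cond_exp M F (\<lambda>x. (f x + t * g x)\<^sup>2) x"
      by (intro real_cond_exp_pos) auto
    moreover have "AE x in M. real_cond_exp M F (\<lambda>x. (f x)\<^sup>2 + ((2 * t) * (f x * g x) + t\<^sup>2 * (g x)\<^sup>2)) x
        = real_cond_exp M F (\<lambda>x. (f x)\<^sup>2) x + real_cond_exp M F (\<lambda>x. (2 * t) * (f x * g x) + t\<^sup>2 * (g x)\<^sup>2) x"
      using int_fg int_g by (intro real_cond_exp_add assms(3)) simp
    moreover have "AE x in M. real_cond_exp M F (\<lambda>x. (2 * t) * (f x * g x) + t\<^sup>2 * (g x)\<^sup>2) x
        = real_cond_exp M F (\<lambda>x. (2 * t) * (f x * g x)) x + real_cond_exp M F (\<lambda>x. t\<^sup>2 * (g x)\<^sup>2) x"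
      by (rule real_cond_exp_add[OF int_fg int_g])
    moreover have "AE x in M. real_cond_exp M F (\<lambda>x. (2 * t) * (f x * g x)) x
        = 2 * t * real_cond_exp M F (\<lambda>x. f x * g x) x"
      by (rule real_cond_exp_cmult[OF assms(5)])
    moreover have "AE x in M. real_cond_exp M F (\<lambda>x. t\<^sup>2 * (g x)\<^sup>2) x
        = t\<^sup>2 * real_cond_exp M F (\<lambda>x. (g x)\<^sup>2) x"
      by (rule real_cond_exp_cmult[OF assms(4)])
    ultimately show ?thesis
      unfolding square by eventually_elim simp
  qed
  then have "AE x in M. \<forall>t\<in>\<rat>. 0 \<le> real_cond_exp M F (\<lambda>x. (f x)\<^sup>2) x
      + 2 * t * real_cond_exp M F (\<lambda>x. f x * g x) x + t\<^sup>2 * real_cond_exp M F (\<lambda>x. (g x)\<^sup>2) x"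
    by (subst AE_ball_countable[OF countable_rat]) auto
  moreover have "AE x in M. 0 \<le> real_cond_exp M F (\<lambda>x. (g x)\<^sup>2) x"
    by (intro real_cond_exp_pos) auto
  ultimately show ?thesis
    by eventually_elim (rule sq_le_mult_if_quadratic_nonneg_on_Rats)
qed

lemma AE_abs_centered_le:
  assumes [measurable]: "X \<in> borel_measurable M" and "AE w in M. \<bar>X w\<bar> \<le> c"
  shows "AE w in M. \<bar>X w - real_cond_exp M F X w\<bar> \<le> 2 * c"
proof -
  have "integrable M X"
    using assms(2) by (intro integrable_const_bound[where B = c]) auto
  then have "AE w in M. - c \<le> real_cond_exp M F X w \<and> real_cond_exp M F X w \<le> c"
    using assms(2) by (intro real_cond_exp_between) auto
  with assms(2) show ?thesis
    by eventually_elim auto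
qed

lemma cond_var_nonneg:
  assumes [measurable]: "X \<in> borel_measurable M"
  shows "AE w in M. 0 \<le> cond_var M F X w"
  unfolding cond_var_def by (intro real_cond_exp_pos) auto

lemma integrable_centered_mult:
  assumes [measurable]: "X \<in> borel_measurable M" "Y \<in> borel_measurable M"
    and "AE w in M. \<bar>X w\<bar> \<le> c" "AE w in M. \<bar>Y w\<bar> \<le> c"
  shows "integrable M (\<lambda>w. (X w - real_cond_exp M F X w) * (Y w - real_cond_exp M F Y w))"
  using AE_abs_centered_le[OF assms(1,3)] AE_abs_centered_le[OF assms(2,4)]
  by (intro integrable_mult_of_AE_bounded) auto

lemma integrable_cond_cov:
  assumes "X \<in> borel_measurable M" "Y \<in> borel_measurable M"
    and "AE w in M. \<bar>X w\<bar> \<le> c" "AE w in M. \<bar>Y w\<bar> \<le> c"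
  shows "integrable M (cond_cov M F X Y)"
  unfolding cond_cov_def using integrable_centered_mult[OF assms] by (rule real_cond_exp_int(1))

lemma integral_cond_cov:
  assumes "X \<in> borel_measurable M" "Y \<in> borel_measurable M"
    and "AE w in M. \<bar>X w\<bar> \<le> c" "AE w in M. \<bar>Y w\<bar> \<le> c"
  shows "(\<integral>w. cond_cov M F X Y w \<partial>M)
    = (\<integral>w. (X w - real_cond_exp M F X w) * (Y w - real_cond_exp M F Y w) \<partial>M)"
  unfolding cond_cov_def using integrable_centered_mult[OF assms] by (rule real_cond_exp_int(2))

lemma cond_cov_square_le:
  assumes "X \<in> borel_measurable M" "Y \<in> borel_measurable M"
    and "AE w in M. \<bar>X w\<bar> \<le> c" "AE w in M. \<bar>Y w\<bar> \<le> c"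
  shows "AE w in M. (cond_cov M F X Y w)\<^sup>2 \<le> cond_var M F X w * cond_var M F Y w"
  using real_cond_exp_cauchy_schwarz[of "\<lambda>w. X w - real_cond_exp M F X w" "\<lambda>w. Y w - real_cond_exp M F Y w"]
    integrable_centered_mult[OF assms] integrable_centered_mult[OF assms(1,1,3,3)]
    integrable_centered_mult[OF assms(2,2,4,4)] assms(1,2)
  unfolding cond_cov_def cond_var_def power2_eq_square by simp

lemma integral_cond_var_diff:
  assumes [measurable]: "X \<in> borel_measurable M" "Y \<in> borel_measurable M"
    and bounded: "AE w in M. \<bar>X w\<bar> \<le> c" "AE w in M. \<bar>Y w\<bar> \<le> c"
  shows "(\<integral>w. cond_var M F (\<lambda>v. X v - Y v) w \<partial>M)
    = (\<integral>w. cond_var M F X w \<partial>M) - 2 * (\<integral>w. cond_cov M F X Y w \<partial>M) + (\<integral>w. cond_var M F Y w \<partial>M)"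
proof -
  define a where "a w = X w - real_cond_exp M F X w" for w
  define b where "b w = Y w - real_cond_exp M F Y w" for w
  have [measurable]: "a \<in> borel_measurable M" "b \<in> borel_measurable M"
    unfolding a_def b_def by simp_all
  have int_X: "integrable M X" and int_Y: "integrable M Y"
    using bounded by (auto intro: integrable_const_bound[where B = c])
  have int_ab: "integrable M (\<lambda>w. a w * b w)" "integrable M (\<lambda>w. a w * a w)" "integrable M (\<lambda>w. b w * b w)"
    unfolding a_def b_def using integrable_centered_mult assms by blast+
  have "AE w in M. X w - Y w - real_cond_exp M F (\<lambda>v. X v - Y v) w = a w - b w"
    using real_cond_exp_diff[OF int_X int_Y] by eventually_elim (simp add: a_def b_def)
  then have expand: "AE w in M. (X w - Y w - real_cond_exp M F (\<lambda>v. X v - Y v) w)\<^sup>2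
      = a w * a w - 2 * (a w * b w) + b w * b w"
  proof eventually_elim
    case (elim w)
    then show ?case by (simp only: power2_eq_square) (simp add: algebra_simps)
  qed
  have int_expanded: "integrable M (\<lambda>w. a w * a w - 2 * (a w * b w) + b w * b w)"
    using int_ab by simp
  have int_diff: "integrable M (\<lambda>w. (X w - Y w - real_cond_exp M F (\<lambda>v. X v - Y v) w)\<^sup>2)"
    using integrable_cong_AE_imp[OF int_expanded _ AE_symmetric[OF expand]] by simp
  have "(\<integral>w. (X w - Y w - real_cond_exp M F (\<lambda>v. X v - Y v) w)\<^sup>2 \<partial>M)
      = (\<integral>w. a w * a w - 2 * (a w * b w) + b w * b w \<partial>M)"
    using expand by (rule integral_cong_AE[rotated 2]) simp_all
  also have "\<dots> = (\<integral>w. a w * a w \<partial>M) - 2 * (\<integral>w. a w * b w \<partial>M) + (\<integral>w. b w * b w \<partial>M)"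
    using int_ab by simp
  finally have "(\<integral>w. cond_var M F (\<lambda>v. X v - Y v) w \<partial>M)
      = (\<integral>w. a w * a w \<partial>M) - 2 * (\<integral>w. a w * b w \<partial>M) + (\<integral>w. b w * b w \<partial>M)"
    using real_cond_exp_int(2)[OF int_diff] unfolding cond_var_def by simp
  then show ?thesis
    using integral_cond_cov[OF assms(1,2,3,4)] integral_cond_cov[OF assms(1,1,3,3)]
      integral_cond_cov[OF assms(2,2,4,4)]
    by (simp add: cond_var_eq_cond_cov a_def b_def)
qed

lemma cond_var_eq_shift:
  assumes [measurable]: "X \<in> borel_measurable M" and m_F[measurable]: "m \<in> borel_measurable F"
    and bounded: "AE w in M. \<bar>X w\<bar> \<le> c" "AE w in M. \<bar>m w\<bar> \<le> c"
  shows "AE w in M. cond_var M F X w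
    = real_cond_exp M F (\<lambda>v. (X v - m v)\<^sup>2) w - (real_cond_exp M F X w - m w)\<^sup>2"
proof -
  have [measurable]: "m \<in> borel_measurable M"
    using measurable_from_subalg[OF subalg m_F] .
  define u where "u w = real_cond_exp M F X w - m w" for w
  have [measurable]: "u \<in> borel_measurable F"
    unfolding u_def by measurable
  then have [measurable]: "u \<in> borel_measurable M"
    using measurable_from_subalg[OF subalg] by blast
  have int_X: "integrable M X" and int_m: "integrable M m"
    using bounded by (auto intro: integrable_const_bound[where B = c])
  have "AE w in M. - c \<le> real_cond_exp M F X w \<and> real_cond_exp M F X w \<le> c"
    using bounded(1) by (intro real_cond_exp_between[OF int_X]) auto
  with bounded have diff_bounded: "AE w in M. \<bar>X w - m w\<bar> \<le> 2 * c \<and> \<bar>u w\<bar> \<le> 2 * c"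
    unfolding u_def by eventually_elim auto
  have int_sq: "integrable M (\<lambda>w. (X w - m w)\<^sup>2)"
    and int_u: "integrable M (\<lambda>w. u w * (X w - m w))"
    and int_uu: "integrable M (\<lambda>w. u w * u w)"
    using diff_bounded unfolding power2_eq_square
    by (auto intro!: integrable_mult_of_AE_bounded[where a = "2 * c" and b = "2 * c"])
  have int_2u: "integrable M (\<lambda>w. 2 * (u w * (X w - m w)))"
    using int_u by simp
  have "(\<lambda>w. (X w - real_cond_exp M F X w)\<^sup>2)
      = (\<lambda>w. ((X w - m w)\<^sup>2 - 2 * (u w * (X w - m w))) + u w * u w)"
    by (auto simp: u_def power2_eq_square algebra_simps)
  then have expand: "cond_var M F X
      = real_cond_exp M F (\<lambda>w. ((X w - m w)\<^sup>2 - 2 * (u w * (X w - m w))) + u w * u w)"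
    unfolding cond_var_def by simp
  have "AE w in M. real_cond_exp M F (\<lambda>w. ((X w - m w)\<^sup>2 - 2 * (u w * (X w - m w))) + u w * u w) w
      = real_cond_exp M F (\<lambda>w. (X w - m w)\<^sup>2 - 2 * (u w * (X w - m w))) w + real_cond_exp M F (\<lambda>w. u w * u w) w"
    using int_sq int_2u int_uu by (intro real_cond_exp_add) auto
  moreover have "AE w in M. real_cond_exp M F (\<lambda>w. (X w - m w)\<^sup>2 - 2 * (u w * (X w - m w))) w
      = real_cond_exp M F (\<lambda>w. (X w - m w)\<^sup>2) w - real_cond_exp M F (\<lambda>w. 2 * (u w * (X w - m w))) w"
    by (rule real_cond_exp_diff[OF int_sq int_2u])
  moreover have "AE w in M. real_cond_exp M F (\<lambda>w. 2 * (u w * (X w - m w))) w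
      = 2 * real_cond_exp M F (\<lambda>w. u w * (X w - m w)) w"
    by (rule real_cond_exp_cmult[OF int_u])
  moreover have "AE w in M. real_cond_exp M F (\<lambda>w. u w * (X w - m w)) w
      = u w * real_cond_exp M F (\<lambda>w. X w - m w) w"
    using int_u by (intro real_cond_exp_mult) auto
  moreover have "AE w in M. real_cond_exp M F (\<lambda>w. X w - m w) w = real_cond_exp M F X w - real_cond_exp M F m w"
    by (rule real_cond_exp_diff[OF int_X int_m])
  moreover have "AE w in M. real_cond_exp M F m w = m w"
    using int_m by (intro real_cond_exp_F_meas) auto
  moreover have "AE w in M. real_cond_exp M F (\<lambda>w. u w * u w) w = u w * u w"
    using int_uu by (intro real_cond_exp_F_meas) auto
  ultimately show ?thesis
    unfolding expand by eventually_elim (simp add: u_def power2_eq_square algebra_simps)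
qed

lemma cond_var_le_if_AE_dist_le:
  assumes [measurable]: "X \<in> borel_measurable M" "m \<in> borel_measurable F"
    and "AE w in M. \<bar>X w\<bar> \<le> c" and close: "AE w in M. \<bar>X w - m w\<bar> \<le> d"
  shows "AE w in M. cond_var M F X w \<le> d\<^sup>2"
proof -
  have [measurable]: "m \<in> borel_measurable M"
    using measurable_from_subalg[OF subalg] assms(2) by blast
  have bounded: "AE w in M. \<bar>X w\<bar> \<le> c + d" "AE w in M. \<bar>m w\<bar> \<le> c + d"
    using assms(3) close by auto
  have "AE w in M. (X w - m w)\<^sup>2 \<le> d\<^sup>2"
    using close by eventually_elim (simp add: abs_le_square_iff[symmetric])
  moreover have "integrable M (\<lambda>v. (X v - m v)\<^sup>2)"
    unfolding power2_eq_square using close by (intro integrable_mult_of_AE_bounded) auto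
  ultimately have "AE w in M. real_cond_exp M F (\<lambda>v. (X v - m v)\<^sup>2) w \<le> d\<^sup>2"
    by (intro real_cond_exp_le_c)
  with cond_var_eq_shift[OF assms(1,2) bounded] show ?thesis
    by eventually_elim (smt (verit) zero_le_power2)
qed

lemma cond_var_le_mean_mul_compl:
  assumes [measurable]: "X \<in> borel_measurable M" and unit: "AE w in M. 0 \<le> X w \<and> X w \<le> 1"
  shows "AE w in M. cond_var M F X w \<le> real_cond_exp M F X w * (1 - real_cond_exp M F X w)"
proof -
  have bounded: "AE w in M. \<bar>X w\<bar> \<le> 1" "AE w in M. \<bar>(0::real)\<bar> \<le> 1"
    using unit by auto
  have int_X: "integrable M X" and int_sq: "integrable M (\<lambda>w. (X w)\<^sup>2)"
    using bounded unfolding power2_eq_square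
    by (auto intro: integrable_const_bound[where B = 1] integrable_mult_of_AE_bounded)
  have "AE w in M. (X w)\<^sup>2 \<le> X w"
    using unit by eventually_elim (simp add: power2_eq_square mult_left_le)
  then have "AE w in M. real_cond_exp M F (\<lambda>v. (X v)\<^sup>2) w \<le> real_cond_exp M F X w"
    using int_sq int_X by (intro real_cond_exp_mono)
  with cond_var_eq_shift[where m = "\<lambda>_. 0", OF assms(1) borel_measurable_const bounded] show ?thesis
    by eventually_elim (simp add: power2_eq_square algebra_simps)
qed

lemma AE_abs_cond_cov_le:
  assumes [measurable]: "X \<in> borel_measurable M" "Y \<in> borel_measurable M"
    and X_bounded: "AE w in M. \<bar>X w\<bar> \<le> a" and Y_unit: "AE w in M. 0 \<le> Y w \<and> Y w \<le> 1"
    and version: "AE w in M. real_cond_exp M F Y w = c w"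
  shows "AE w in M. 0 \<le> cond_var M F X w \<and> 0 \<le> c w \<and> c w \<le> 1 \<and>
    \<bar>cond_cov M F X Y w\<bar> \<le> sqrt (cond_var M F X w) * sqrt (c w * (1 - c w))"
proof -
  have "AE w in M. \<bar>X w\<bar> \<le> max a 1" "AE w in M. \<bar>Y w\<bar> \<le> max a 1"
    using X_bounded Y_unit by auto
  note cauchy_schwarz = cond_cov_square_le[OF assms(1,2) this]
  have "integrable M Y"
    using Y_unit by (intro integrable_const_bound[where B = 1]) auto
  then have "AE w in M. 0 \<le> real_cond_exp M F Y w \<and> real_cond_exp M F Y w \<le> 1"
    using Y_unit by (rule real_cond_exp_between)
  with cauchy_schwarz cond_var_nonneg[OF assms(1)] cond_var_le_mean_mul_compl[OF assms(2) Y_unit] version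
  show ?thesis
  proof eventually_elim
    case (elim w)
    then have "(cond_cov M F X Y w)\<^sup>2 \<le> cond_var M F X w * (c w * (1 - c w))"
      by (metis mult_left_mono order_trans)
    then have "sqrt ((cond_cov M F X Y w)\<^sup>2) \<le> sqrt (cond_var M F X w * (c w * (1 - c w)))"
      by (rule real_sqrt_le_mono)
    with elim show ?case
      by (simp add: real_sqrt_mult)
  qed
qed

lemma integral_cond_var_diff_eq:
  assumes "S \<in> borel_measurable M" "C \<in> borel_measurable M"
    and "AE w in M. \<bar>S w\<bar> \<le> a" "AE w in M. \<bar>C w\<bar> \<le> a"
  shows "integrable M (\<lambda>w. 2 * cond_cov M F S C w - cond_var M F S w)"
    and "(\<integral>w. cond_var M F C w \<partial>M) - (\<integral>w. cond_var M F (\<lambda>v. S v - C v) w \<partial>M)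
      = (\<integral>w. 2 * cond_cov M F S C w - cond_var M F S w \<partial>M)"
proof -
  have int_cov: "integrable M (cond_cov M F S C)" and int_var: "integrable M (cond_var M F S)"
    using integrable_cond_cov[OF assms] integrable_cond_cov[OF assms(1,1,3,3)]
    by (simp_all add: cond_var_eq_cond_cov)
  then show "integrable M (\<lambda>w. 2 * cond_cov M F S C w - cond_var M F S w)"
    by simp
  show "(\<integral>w. cond_var M F C w \<partial>M) - (\<integral>w. cond_var M F (\<lambda>v. S v - C v) w \<partial>M)
      = (\<integral>w. 2 * cond_cov M F S C w - cond_var M F S w \<partial>M)"
    using integral_cond_var_diff[OF assms] int_cov int_var by simp
qed

lemma integral_cond_var_diff_bounds:
  assumes [measurable]: "S \<in> borel_measurable M" "C \<in> borel_measurable M" "c \<in> borel_measurable M"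
    and S_bounded: "AE w in M. \<bar>S w\<bar> \<le> a" and C_unit: "AE w in M. 0 \<le> C w \<and> C w \<le> 1"
    and version: "AE w in M. real_cond_exp M F C w = c w"
  defines "\<Delta> \<equiv> (\<integral>w. cond_var M F C w \<partial>M) - (\<integral>w. cond_var M F (\<lambda>v. S v - C v) w \<partial>M)"
  shows "- (\<integral>w. sqrt (cond_var M F S w) * (2 * sqrt (c w * (1 - c w)) + sqrt (cond_var M F S w)) \<partial>M) \<le> \<Delta>"
    and "\<Delta> \<le> (\<integral>w. sqrt (cond_var M F S w) * (2 * sqrt (c w * (1 - c w)) - sqrt (cond_var M F S w)) \<partial>M)"
proof -
  let ?V = "cond_var M F S" and ?s = "\<lambda>w. sqrt (c w * (1 - c w))"
  have "AE w in M. \<bar>S w\<bar> \<le> max a 1" "AE w in M. \<bar>C w\<bar> \<le> max a 1"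
    using S_bounded C_unit by auto
  note decomposition = integral_cond_var_diff_eq[OF assms(1,2) this]
  have [measurable]: "?V \<in> borel_measurable M"
    unfolding cond_var_def by simp
  have "AE w in M. ?V w \<le> a\<^sup>2"
    using S_bounded by (intro cond_var_le_if_AE_dist_le[where m = "\<lambda>_. 0"]) auto
  with AE_abs_cond_cov_le[OF assms(1,2) S_bounded C_unit version]
  have pointwise: "AE w in M. 0 \<le> ?V w \<and> \<bar>sqrt (?V w)\<bar> \<le> \<bar>a\<bar> \<and> \<bar>?s w\<bar> \<le> 1 \<and>
      \<bar>cond_cov M F S C w\<bar> \<le> sqrt (?V w) * ?s w"
  proof eventually_elim
    case (elim w)
    then have "c w * (1 - c w) \<le> 1"
      by (simp add: mult_le_one)
    with elim show ?case
      using real_sqrt_le_mono[of "?V w" "a\<^sup>2"] by auto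
  qed
  have "AE w in M. \<bar>2 * ?s w + sqrt (?V w)\<bar> \<le> 2 + \<bar>a\<bar>" "AE w in M. \<bar>2 * ?s w - sqrt (?V w)\<bar> \<le> 2 + \<bar>a\<bar>"
    using pointwise by (eventually_elim, arith)+
  then have "integrable M (\<lambda>w. sqrt (?V w) * (2 * ?s w + sqrt (?V w)))"
    and "integrable M (\<lambda>w. sqrt (?V w) * (2 * ?s w - sqrt (?V w)))"
    using pointwise by (auto intro!: integrable_mult_of_AE_bounded)
  then show "- (\<integral>w. sqrt (?V w) * (2 * ?s w + sqrt (?V w)) \<partial>M) \<le> \<Delta>"
    and "\<Delta> \<le> (\<integral>w. sqrt (?V w) * (2 * ?s w - sqrt (?V w)) \<partial>M)"
    unfolding \<Delta>_def decomposition(2) using pointwise decomposition(1)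
    by (auto intro!: integral_mono_AE two_mul_minus_bounds simp flip: integral_minus)
qed

end

lemma (in prob_space) integral_cond_var_diff_bounds_of_le_sq:
  assumes "subalgebra M F"
    and [measurable]: "S \<in> borel_measurable M" "C \<in> borel_measurable M" "c \<in> borel_measurable M"
    and S_bounded: "AE w in M. \<bar>S w\<bar> \<le> a" and C_unit: "AE w in M. 0 \<le> C w \<and> C w \<le> 1"
    and version: "AE w in M. real_cond_exp M F C w = c w"
    and small: "AE w in M. cond_var M F S w \<le> d\<^sup>2" and "0 \<le> d"
  defines "\<Delta> \<equiv> (\<integral>w. cond_var M F C w \<partial>M) - (\<integral>w. cond_var M F (\<lambda>v. S v - C v) w \<partial>M)"
  shows "- (2 * d) * (\<integral>w. sqrt (c w * (1 - c w)) \<partial>M) - d\<^sup>2 \<le> \<Delta>"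
    and "\<Delta> \<le> (2 * d) * (\<integral>w. sqrt (c w * (1 - c w)) \<partial>M)"
proof -
  interpret finite_measure_subalgebra M F
    using \<open>subalgebra M F\<close> by unfold_locales
  let ?s = "\<lambda>w. sqrt (c w * (1 - c w))"
  have "AE w in M. \<bar>S w\<bar> \<le> max a 1" "AE w in M. \<bar>C w\<bar> \<le> max a 1"
    using S_bounded C_unit by auto
  note decomposition = integral_cond_var_diff_eq[OF assms(2,3) this]
  have pointwise: "AE w in M. 0 \<le> cond_var M F S w \<and> cond_var M F S w \<le> d\<^sup>2 \<and> 0 \<le> ?s w \<and> ?s w \<le> 1 \<and>
      \<bar>cond_cov M F S C w\<bar> \<le> sqrt (cond_var M F S w) * ?s w"
    using AE_abs_cond_cov_le[OF assms(2,3) S_bounded C_unit version] small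
    by eventually_elim (auto simp: mult_le_one)
  have int_s: "integrable M ?s"
    using pointwise by (intro integrable_const_bound[where B = 1]) auto
  have pointwise_bounds: "AE w in M. - (2 * d * ?s w) - d\<^sup>2 \<le> 2 * cond_cov M F S C w - cond_var M F S w
      \<and> 2 * cond_cov M F S C w - cond_var M F S w \<le> 2 * d * ?s w"
    using pointwise
  proof eventually_elim
    case (elim w)
    with \<open>0 \<le> d\<close> show ?case
      using two_mul_minus_bounds_of_le_sq[of "cond_cov M F S C w" "cond_var M F S w" "?s w" d] by auto
  qed
  have "(\<integral>w. - (2 * d * ?s w) - d\<^sup>2 \<partial>M) \<le> (\<integral>w. 2 * cond_cov M F S C w - cond_var M F S w \<partial>M)"
    using int_s decomposition(1) pointwise_bounds by (intro integral_mono_AE) auto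
  moreover have "(\<integral>w. 2 * cond_cov M F S C w - cond_var M F S w \<partial>M) \<le> (\<integral>w. 2 * d * ?s w \<partial>M)"
    using int_s decomposition(1) pointwise_bounds by (intro integral_mono_AE) auto
  ultimately show "- (2 * d) * (\<integral>w. ?s w \<partial>M) - d\<^sup>2 \<le> \<Delta>"
    and "\<Delta> \<le> (2 * d) * (\<integral>w. ?s w \<partial>M)"
    unfolding \<Delta>_def decomposition(2) using int_s by (simp_all add: prob_space)
qed

lemma subalgebra_vimage_algebra:
  assumes "f \<in> measurable M N"
  shows "subalgebra M (vimage_algebra (space M) f N)"
  unfolding subalgebra_def using sets_image_in_sets[OF refl assms] by simp

lemma measurable_gen_sigma: "S \<in> borel_measurable (gen_sigma M S)"
  unfolding gen_sigma_def by (rule measurable_vimage_algebra1) simp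

lemma subalgebra_gen_sigma: "S \<in> borel_measurable M \<Longrightarrow> subalgebra M (gen_sigma M S)"
  unfolding gen_sigma_def by (rule subalgebra_vimage_algebra)

lemma subalgebra_gen_sigma_comp:
  assumes "g \<in> borel_measurable borel" and "\<And>w. w \<in> space M \<Longrightarrow> T w = g (S w)"
  shows "subalgebra (gen_sigma M S) (gen_sigma M T)"
proof -
  have "(\<lambda>w. g (S w)) \<in> borel_measurable (gen_sigma M S)"
    using measurable_comp[OF measurable_gen_sigma assms(1)] by (simp add: comp_def)
  then have "T \<in> borel_measurable (gen_sigma M S)"
    using assms(2) by (subst measurable_cong) (auto simp: gen_sigma_def)
  from subalgebra_vimage_algebra[OF this] show ?thesis
    by (simp add: gen_sigma_def)
qed

lemma bin_partition_unique:
  assumes "bin_partition \<B>" "B \<in> \<B>" "B' \<in> \<B>" "x \<in> B" "x \<in> B'"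
  shows "B' = B"
proof (rule ccontr)
  assume "B' \<noteq> B"
  with assms have "B' \<inter> B = {}"
    unfolding bin_partition_def by (auto dest: disjointD)
  with assms(4,5) show False
    by blast
qed

lemma bin_partition_the_eq:
  assumes "bin_partition \<B>" "B \<in> \<B>" "x \<in> B"
  shows "(THE B'. B' \<in> \<B> \<and> x \<in> B') = B"
  using assms by (intro the_equality) (auto dest: bin_partition_unique)

lemma bin_partition_sum_indicator:
  fixes \<phi> :: "real set \<Rightarrow> real"
  assumes "bin_partition \<B>" "B \<in> \<B>" "x \<in> B"
  shows "(\<Sum>B'\<in>\<B>. indicator B' x * \<phi> B') = \<phi> B"
proof -
  have "finite \<B>"
    using assms(1) by (simp add: bin_partition_def)
  then have "(\<Sum>B'\<in>\<B>. indicator B' x * \<phi> B') = indicator B x * \<phi> B + (\<Sum>B'\<in>\<B> - {B}. indicator B' x * \<phi> B')"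
    using assms(2) by (rule sum.remove)
  also have "(\<Sum>B'\<in>\<B> - {B}. indicator B' x * \<phi> B') = 0"
    using bin_partition_unique[OF assms(1,2) _ assms(3)] by (intro sum.neutral) (auto simp: indicator_def)
  finally show ?thesis
    using assms(3) by simp
qed

lemma borel_measurable_bin_sum:
  fixes \<phi> :: "real set \<Rightarrow> real"
  assumes "bin_partition \<B>"
  shows "(\<lambda>x. \<Sum>B\<in>\<B>. indicator B x * \<phi> B) \<in> borel_measurable borel"
  using assms unfolding bin_partition_def
  by (intro borel_measurable_sum borel_measurable_times borel_measurable_indicator real_interval_borel_measurable) auto

lemma binned_eq_sum:
  assumes "bin_partition \<B>" "S w \<in> {0..1}"
  shows "binned M \<B> S w = (\<Sum>B\<in>\<B>. indicator B (S w) * bin_mean M S B)"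
proof -
  obtain B where "B \<in> \<B>" "S w \<in> B"
    using assms unfolding bin_partition_def by blast
  then show ?thesis
    using assms(1) by (simp add: binned_def bin_partition_the_eq bin_partition_sum_indicator)
qed

lemma measurable_binned:
  assumes "bin_partition \<B>" "S \<in> borel_measurable M" "\<And>w. w \<in> space M \<Longrightarrow> S w \<in> {0..1}"
  shows "binned M \<B> S \<in> borel_measurable M"
  using measurable_comp[OF assms(2) borel_measurable_bin_sum[OF assms(1)]] assms
  by (subst measurable_cong[OF binned_eq_sum]) (auto simp: comp_def)

lemma subalgebra_gen_sigma_binned:
  assumes "bin_partition \<B>" "\<And>w. w \<in> space M \<Longrightarrow> S w \<in> {0..1}"
  shows "subalgebra (gen_sigma M S) (gen_sigma M (binned M \<B> S))"
proof (rule subalgebra_gen_sigma_comp[OF borel_measurable_bin_sum[OF assms(1)]])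
  fix w
  assume "w \<in> space M"
  then show "binned M \<B> S w = (\<Sum>B\<in>\<B>. indicator B (S w) * bin_mean M S B)"
    by (intro binned_eq_sum[OF assms(1)] assms(2))
qed

lemma abs_sub_midpoint_le:
  fixes B :: "real set"
  assumes "bdd_below B" "bdd_above B" "x \<in> B"
  shows "\<bar>x - (Inf B + Sup B) / 2\<bar> \<le> (Sup B - Inf B) / 2"
  using cInf_lower[OF assms(3,1)] cSup_upper[OF assms(3,2)] by (auto simp: abs_if field_simps)

lemma (in finite_measure) AE_measure_vimage_nonzero:
  assumes [measurable]: "S \<in> borel_measurable M" "B \<in> sets borel"
  shows "AE w in M. S w \<in> B \<longrightarrow> measure M (S -` B \<inter> space M) \<noteq> 0"
proof (cases "measure M (S -` B \<inter> space M) = 0")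
  case True
  then have "S -` B \<inter> space M \<in> null_sets M"
    by (simp add: null_sets_def emeasure_eq_measure)
  then have "AE w in M. w \<notin> S -` B \<inter> space M"
    by (rule AE_not_in)
  with AE_space show ?thesis
    by eventually_elim auto
qed simp

lemma (in finite_measure) bin_mean_mem:
  assumes [measurable]: "S \<in> borel_measurable M"
    and B: "is_interval B" "bounded B" and nonnull: "measure M (S -` B \<inter> space M) \<noteq> 0"
  shows "bin_mean M S B \<in> B"
proof (rule ccontr)
  define A where "A = S -` B \<inter> space M"
  define c where "c = bin_mean M S B"
  assume "c \<notin> B"
  have [measurable]: "B \<in> sets borel"
    using B(1) by (rule real_interval_borel_measurable)
  have [measurable]: "A \<in> sets M"
    unfolding A_def by measurable
  obtain r where "0 < r" and r: "\<And>x. x \<in> B \<Longrightarrow> \<bar>x\<bar> \<le> r"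
    using B(2) by (auto simp: bounded_pos)
  have int_S: "integrable M (\<lambda>w. indicator A w * S w)"
    by (intro integrable_const_bound[where B = r]) (use \<open>0 < r\<close> in \<open>auto simp: A_def indicator_def r\<close>)
  have int_c: "integrable M (\<lambda>w. indicator A w * c)"
    by (intro integrable_const_bound[where B = "\<bar>c\<bar>"]) (auto simp: indicator_def)
  have "(\<integral>w. indicator A w * S w \<partial>M) = c * measure M A"
    using nonnull unfolding c_def bin_mean_def A_def set_lebesgue_integral_def by simp
  also have "\<dots> = (\<integral>w. indicator A w * c \<partial>M)"
    by simp
  finally have same_mean: "(\<integral>w. indicator A w * S w \<partial>M) = (\<integral>w. indicator A w * c \<partial>M)" .
  have A_nonnull: "emeasure M A \<noteq> 0"
    using nonnull unfolding A_def by (simp add: emeasure_eq_measure)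
  have off_c: "AE w in M. w \<in> A \<longrightarrow> indicator A w * S w \<noteq> indicator A w * c"
    using \<open>c \<notin> B\<close> by (auto simp: A_def)
  have "(\<forall>x\<in>B. c < x) \<or> (\<forall>x\<in>B. x < c)"
    using \<open>c \<notin> B\<close> mem_is_interval_1_I[OF B(1)] by (meson linorder_not_le)
  then show False
  proof
    assume "\<forall>x\<in>B. c < x"
    then have "(\<integral>w. indicator A w * c \<partial>M) < (\<integral>w. indicator A w * S w \<partial>M)"
      using off_c by (intro integral_less_AE[OF int_c int_S A_nonnull]) (auto simp: A_def indicator_def less_imp_le)
    with same_mean show False by simp
  next
    assume "\<forall>x\<in>B. x < c"
    then have "(\<integral>w. indicator A w * S w \<partial>M) < (\<integral>w. indicator A w * c \<partial>M)"
      using off_c by (intro integral_less_AE[OF int_S int_c A_nonnull]) (auto simp: A_def indicator_def less_imp_le)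
    with same_mean show False by simp
  qed
qed

lemma (in prob_space) cond_var_binned_le:
  assumes partition: "bin_partition \<B>" and [measurable]: "S \<in> borel_measurable M"
    and unit: "\<And>w. w \<in> space M \<Longrightarrow> S w \<in> {0..1}" and width: "\<forall>B\<in>\<B>. Sup B - Inf B \<le> \<delta>"
  shows "AE w in M. cond_var M (gen_sigma M (binned M \<B> S)) S w \<le> (\<delta> / 2)\<^sup>2"
proof -
  let ?SB = "binned M \<B> S"
  define mid where "mid B = (Inf B + Sup B) / 2" for B :: "real set"
  have bins: "finite \<B>" "\<And>B. B \<in> \<B> \<Longrightarrow> is_interval B \<and> B \<subseteq> {0..1}"
    using partition unfolding bin_partition_def by auto
  have [measurable]: "?SB \<in> borel_measurable M"
    using partition unit by (intro measurable_binned) auto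
  interpret finite_measure_subalgebra M "gen_sigma M ?SB"
    using subalgebra_gen_sigma[of ?SB M] by unfold_locales simp
  define m where "m w = (\<Sum>B\<in>\<B>. indicator B (?SB w) * mid B)" for w
  have "m \<in> borel_measurable (gen_sigma M ?SB)"
    unfolding m_def using measurable_comp[OF measurable_gen_sigma borel_measurable_bin_sum[OF partition]]
    by (simp add: comp_def)
  moreover have "AE w in M. \<forall>B\<in>\<B>. S w \<in> B \<longrightarrow> measure M (S -` B \<inter> space M) \<noteq> 0"
    using bins by (intro AE_finite_allI AE_measure_vimage_nonzero real_interval_borel_measurable) auto
  then have "AE w in M. \<bar>S w - m w\<bar> \<le> \<delta> / 2"
  proof (rule AE_mp, intro AE_I2 impI)
    fix w
    assume "w \<in> space M" and nonnull: "\<forall>B\<in>\<B>. S w \<in> B \<longrightarrow> measure M (S -` B \<inter> space M) \<noteq> 0"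
    then obtain B where B: "B \<in> \<B>" "S w \<in> B"
      using unit partition unfolding bin_partition_def by blast
    have bounded_B: "bounded B"
      using bins(2)[OF B(1)] bounded_closed_interval bounded_subset by blast
    have "bin_mean M S B \<in> B"
      using bins(2)[OF B(1)] bounded_B nonnull B by (intro bin_mean_mem) auto
    then have "m w = mid B"
      unfolding m_def binned_def bin_partition_the_eq[OF partition B]
      using bin_partition_sum_indicator[OF partition B(1)] by blast
    moreover have "\<bar>S w - mid B\<bar> \<le> (Sup B - Inf B) / 2"
      unfolding mid_def using bounded_B B(2)
      by (intro abs_sub_midpoint_le) (auto simp: bounded_imp_bdd_below bounded_imp_bdd_above)
    ultimately show "\<bar>S w - m w\<bar> \<le> \<delta> / 2"
      using width B(1) by auto
  qed
  moreover have "AE w in M. \<bar>S w\<bar> \<le> 1"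
    using unit by auto
  ultimately show ?thesis
    by (intro cond_var_le_if_AE_dist_le) auto
qed

lemma (in prob_space) binned_cond_var_diff_bounds:
  assumes partition: "bin_partition \<B>" and [measurable]: "S \<in> borel_measurable M"
    and S_unit: "\<And>w. w \<in> space M \<Longrightarrow> S w \<in> {0..1}"
    and Q_int: "integrable M Q" and Q_unit: "AE w in M. 0 \<le> Q w \<and> Q w \<le> 1"
  defines "G \<equiv> gen_sigma M (binned M \<B> S)"
    and "C \<equiv> real_cond_exp M (gen_sigma M S) Q"
  defines "CB \<equiv> real_cond_exp M G Q"
  defines "\<Delta> \<equiv> (\<integral>w. cond_var M G C w \<partial>M) - (\<integral>w. cond_var M G (\<lambda>v. S v - C v) w \<partial>M)"
  shows "- (\<integral>w. sqrt (cond_var M G S w) * (2 * sqrt (CB w * (1 - CB w)) + sqrt (cond_var M G S w)) \<partial>M) \<le> \<Delta>"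
    and "\<Delta> \<le> (\<integral>w. sqrt (cond_var M G S w) * (2 * sqrt (CB w * (1 - CB w)) - sqrt (cond_var M G S w)) \<partial>M)"
    and "\<lbrakk>\<forall>B\<in>\<B>. Sup B - Inf B \<le> \<delta>; 0 \<le> \<delta>\<rbrakk>
      \<Longrightarrow> - \<delta> * (\<integral>w. sqrt (CB w * (1 - CB w)) \<partial>M) - (\<delta> / 2)\<^sup>2 \<le> \<Delta>"
    and "\<lbrakk>\<forall>B\<in>\<B>. Sup B - Inf B \<le> \<delta>; 0 \<le> \<delta>\<rbrakk>
      \<Longrightarrow> \<Delta> \<le> \<delta> * (\<integral>w. sqrt (CB w * (1 - CB w)) \<partial>M)"
proof -
  have [measurable]: "binned M \<B> S \<in> borel_measurable M"
    using partition S_unit by (intro measurable_binned) auto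
  interpret \<sigma>S: finite_measure_subalgebra M "gen_sigma M S"
    using subalgebra_gen_sigma[of S M] by unfold_locales simp
  interpret G: finite_measure_subalgebra M G
    using subalgebra_gen_sigma[of "binned M \<B> S" M] unfolding G_def by unfold_locales simp
  have C_unit: "AE w in M. 0 \<le> C w \<and> C w \<le> 1"
    unfolding C_def using Q_int Q_unit by (rule \<sigma>S.real_cond_exp_between)
  have "subalgebra (gen_sigma M S) G"
    unfolding G_def using partition S_unit by (rule subalgebra_gen_sigma_binned)
  then have version: "AE w in M. real_cond_exp M G C w = CB w"
    unfolding C_def CB_def by (intro G.real_cond_exp_nested_subalg subalgebra_gen_sigma Q_int) simp_all
  have S_bounded: "AE w in M. \<bar>S w\<bar> \<le> 1"
    using S_unit by auto
  have [measurable]: "C \<in> borel_measurable M" "CB \<in> borel_measurable M"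
    unfolding C_def CB_def by simp_all
  show "- (\<integral>w. sqrt (cond_var M G S w) * (2 * sqrt (CB w * (1 - CB w)) + sqrt (cond_var M G S w)) \<partial>M) \<le> \<Delta>"
    and "\<Delta> \<le> (\<integral>w. sqrt (cond_var M G S w) * (2 * sqrt (CB w * (1 - CB w)) - sqrt (cond_var M G S w)) \<partial>M)"
    using G.integral_cond_var_diff_bounds[OF _ _ _ S_bounded C_unit version] unfolding \<Delta>_def by simp_all
  assume "\<forall>B\<in>\<B>. Sup B - Inf B \<le> \<delta>" and "0 \<le> \<delta>"
  then have "AE w in M. cond_var M G S w \<le> (\<delta> / 2)\<^sup>2"
    unfolding G_def using partition S_unit by (intro cond_var_binned_le) auto
  note width_bounds = integral_cond_var_diff_bounds_of_le_sq[OF G.subalg _ _ _ S_bounded C_unit version this]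
  show "- \<delta> * (\<integral>w. sqrt (CB w * (1 - CB w)) \<partial>M) - (\<delta> / 2)\<^sup>2 \<le> \<Delta>"
    and "\<Delta> \<le> \<delta> * (\<integral>w. sqrt (CB w * (1 - CB w)) \<partial>M)"
    unfolding \<Delta>_def using width_bounds \<open>0 \<le> \<delta>\<close> by simp_all
qed

theorem corollary1:
  fixes M :: "'a measure" and N :: "'x measure"
    and X :: "'a \<Rightarrow> 'x" and Y :: "'a \<Rightarrow> real" and f :: "'x \<Rightarrow> real"
    and \<B> :: "real set set" and Nb :: nat
    and Q S C SB CB CL GL :: "'a \<Rightarrow> real" and CLi GLi :: real
  assumes "prob_space M"
    and "X \<in> measurable M N"
    and "Y \<in> borel_measurable M" and "\<forall>w\<in>space M. Y w \<in> {0, 1}"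
    and "f \<in> borel_measurable N" and "\<forall>x\<in>space N. f x \<in> {0..1}"
    and "bin_partition \<B>"
  defines "Q \<equiv> real_cond_exp M (vimage_algebra (space M) X N) (\<lambda>w. indicator {1} (Y w))"
    and "S \<equiv> (\<lambda>w. f (X w))"
    and "C \<equiv> real_cond_exp M (gen_sigma M S) Q"
    and "SB \<equiv> binned M \<B> S"
    and "CB \<equiv> real_cond_exp M (gen_sigma M SB) Q"
    and "CLi \<equiv> - (\<integral>w. cond_var M (gen_sigma M SB) (\<lambda>v. S v - C v) w \<partial>M)"
    and "GLi \<equiv> (\<integral>w. cond_var M (gen_sigma M SB) C w \<partial>M)"
  shows "- (\<integral>w. sqrt (cond_var M (gen_sigma M SB) S w) *
              (2 * sqrt (CB w * (1 - CB w)) + sqrt (cond_var M (gen_sigma M SB) S w)) \<partial>M)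
           \<le> CLi + GLi
       \<and> CLi + GLi \<le> (\<integral>w. sqrt (cond_var M (gen_sigma M SB) S w) *
              (2 * sqrt (CB w * (1 - CB w)) - sqrt (cond_var M (gen_sigma M SB) S w)) \<partial>M)
       \<and> ((Nb > 0 \<and> (\<forall>B\<in>\<B>. Sup B - Inf B = 1 / real Nb)) \<longrightarrow>
            - (1 / real Nb) * (\<integral>w. sqrt (CB w * (1 - CB w)) \<partial>M) - 1 / (4 * (real Nb)\<^sup>2)
              \<le> CLi + GLi
          \<and> CLi + GLi \<le> (1 / real Nb) * (\<integral>w. sqrt (CB w * (1 - CB w)) \<partial>M))"
proof -
  interpret prob_space M by fact
  have [measurable]: "X \<in> measurable M N" "f \<in> borel_measurable N" "Y \<in> borel_measurable M"
    using assms(2,5,3) .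
  have S_unit: "S w \<in> {0..1}" if "w \<in> space M" for w
    using assms(6) measurable_space[OF assms(2) that] unfolding S_def by blast
  interpret \<sigma>X: finite_measure_subalgebra M "vimage_algebra (space M) X N"
    using subalgebra_vimage_algebra[OF assms(2)] by unfold_locales
  have label_int: "integrable M (\<lambda>w. indicator {1} (Y w) :: real)"
    by (intro integrable_const_bound[where B = 1]) auto
  then have Q_int: "integrable M Q"
    unfolding Q_def by (rule \<sigma>X.real_cond_exp_int(1))
  have Q_unit: "AE w in M. 0 \<le> Q w \<and> Q w \<le> 1"
    unfolding Q_def using label_int by (rule \<sigma>X.real_cond_exp_between) auto
  have S_measurable: "S \<in> borel_measurable M"
    unfolding S_def by measurable
  note bounds = binned_cond_var_diff_bounds[OF assms(7) S_measurable S_unit Q_int Q_unit]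
  have "- (1 / real Nb / 2)\<^sup>2 = - 1 / (4 * (real Nb)\<^sup>2)"
    by (simp add: power2_eq_square)
  with bounds(1,2) bounds(3,4)[where \<delta> = "1 / real Nb"] show ?thesis
    unfolding CLi_def GLi_def CB_def C_def SB_def by auto
qed

end
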